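(* Let $G=(V,E)$ be a finite graph, $A\subset V$, $h\in\mathbb R^V$, $T>0$, and let $(\xi^+,\xi^-),(\zeta^+,\zeta^-)\in(\{-1,1\}^A)^2$ satisfy $\xi^+_v\le\zeta^+_v$ and $\xi^-_v\ge\zeta^-_v$ for all $v\in A$. Then for every increasing event $\mathtt A\subset\Theta^{\bar G}$, $$\bar\mu^{\xi^+/\xi^-}_{G,h}(\mathtt A)\le\bar\mu^{\zeta^+/\zeta^-}_{G,h}(\mathtt A).$$
   Context: Extended Ising model: for a finite graph $G=(V,E)$ let $\bar G=V\cup E$. An extended configuration $\bar\sigma$ assigns $\bar\sigma_v\in\{-1,1\}$ to each $v\in V$ and $\bar\sigma_e\in\{-1,0,1\}$ to each $e\in E$, subject to $|\bar\sigma_v-\bar\sigma_e|\le1$ whenever $v$ is an endpoint of $e$. For $T>0$ and $h\in\mathbb R^V$, $\bar\mu_{G,h}(\bar\sigma)\propto\prod_{e\in E}\prod_{v\in e}W(\bar\sigma_v,\bar\sigma_e)\cdot\exp\big(\frac1T\sum_{v\in V}h_v\bar\sigma_v\big)$, where $W(a,b)=1$ if $b=a$, $t$ if $b=0$, $0$ if $b=-a$, and $t=(e^{2/T}-1)^{-1/2}$. For $A\subset V$ and $\xi\in\{-1,1\}^A$, $\bar\mu^{\xi}_{G,h}$ is $\bar\mu_{G,h}$ conditioned on $\bar\sigma_v=\xi_v$, $v\in A$. $\bar\mu^{\xi^+/\xi^-}_{G,h}=\bar\mu^{\xi^+}_{G,h}\otimes\bar\mu^{\xi^-}_{G,h}$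 is a law on pairs $(\bar\sigma^1,\bar\sigma^2)$, viewed as elements of $\Theta^{\bar G}$, $\Theta=\{-1,0,1\}^2$. Partial order on $\Theta$: $(a,b)\succeq(c,d)$ iff $a\ge c$ and $b\le d$, extended coordinatewise; an event is increasing if it is closed upward under this order. *)

theory Defs
  imports Complex_Main
begin

(* Sites of the extended graph  Gbar = V \<union> E  : vertices are Inl v, edges are Inr e.  Configurations are functions on sites, extended by 0
   outside Gbar (so that they are determined by their values on Gbar). *)
type_synonym 'v site = "'v + 'v set"

definition is_graph :: "'v set \<Rightarrow> 'v set set \<Rightarrow> bool" where
  "is_graph V E \<longleftrightarrow> finite V \<and> (\<forall>e\<in>E. e \<subseteq> V \<and> card e = 2)"

definition sites :: "'v set \<Rightarrow> 'v set set \<Rightarrow> 'v site set" where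
  "sites V E = Inl ` V \<union> Inr ` E"

definition ext_configs :: "'v set \<Rightarrow> 'v set set \<Rightarrow> ('v site \<Rightarrow> int) set" where
  "ext_configs V E = {\<sigma>.
      (\<forall>x. x \<notin> sites V E \<longrightarrow> \<sigma> x = 0) \<and>
      (\<forall>v\<in>V. \<sigma> (Inl v) \<in> {-1, 1}) \<and>
      (\<forall>e\<in>E. \<sigma> (Inr e) \<in> {-1, 0, 1}) \<and>
      (\<forall>e\<in>E. \<forall>v\<in>e. \<bar>\<sigma> (Inl v) - \<sigma> (Inr e)\<bar> \<le> 1)}"

definition t_param :: "real \<Rightarrow> real" where
  "t_param T = 1 / sqrt (exp (2 / T) - 1)"

definition W :: "real \<Rightarrow> int \<Rightarrow> int \<Rightarrow> real" where
  "W T a b = (if b = a then 1 else if b = 0 then t_param T else 0)"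

definition weight :: "'v set \<Rightarrow> 'v set set \<Rightarrow> real \<Rightarrow> ('v \<Rightarrow> real) \<Rightarrow> ('v site \<Rightarrow> int) \<Rightarrow> real" where
  "weight V E T h \<sigma> =
     (\<Prod>e\<in>E. \<Prod>v\<in>e. W T (\<sigma> (Inl v)) (\<sigma> (Inr e))) *
     exp ((1 / T) * (\<Sum>v\<in>V. h v * of_int (\<sigma> (Inl v))))"

definition cond_configs :: "'v set \<Rightarrow> 'v set set \<Rightarrow> 'v set \<Rightarrow> ('v \<Rightarrow> int) \<Rightarrow> ('v site \<Rightarrow> int) set" where
  "cond_configs V E A \<xi> = {\<sigma> \<in> ext_configs V E. \<forall>v\<in>A. \<sigma> (Inl v) = \<xi> v}"

definition pair_config :: "('v site \<Rightarrow> int) \<Rightarrow> ('v site \<Rightarrow> int) \<Rightarrow> 'v site \<Rightarrow> int \<times> int" where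
  "pair_config \<sigma>1 \<sigma>2 = (\<lambda>x. (\<sigma>1 x, \<sigma>2 x))"

definition Theta :: "(int \<times> int) set" where
  "Theta = {-1, 0, 1} \<times> {-1, 0, 1}"

definition Theta_configs :: "'v set \<Rightarrow> 'v set set \<Rightarrow> ('v site \<Rightarrow> int \<times> int) set" where
  "Theta_configs V E = {\<eta>. (\<forall>x\<in>sites V E. \<eta> x \<in> Theta) \<and> (\<forall>x. x \<notin> sites V E \<longrightarrow> \<eta> x = (0, 0))}"

definition theta_ge :: "int \<times> int \<Rightarrow> int \<times> int \<Rightarrow> bool" where
  "theta_ge p q \<longleftrightarrow> fst p \<ge> fst q \<and> snd p \<le> snd q"

definition increasing_event :: "'v set \<Rightarrow> 'v set set \<Rightarrow> ('v site \<Rightarrow> int \<times> int) set \<Rightarrow> bool" where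
  "increasing_event V E Ev \<longleftrightarrow> Ev \<subseteq> Theta_configs V E \<and>
     (\<forall>\<eta>\<in>Ev. \<forall>\<eta>'\<in>Theta_configs V E.
        (\<forall>x\<in>sites V E. theta_ge (\<eta>' x) (\<eta> x)) \<longrightarrow> \<eta>' \<in> Ev)"

definition pair_measure ::
  "'v set \<Rightarrow> 'v set set \<Rightarrow> real \<Rightarrow> ('v \<Rightarrow> real) \<Rightarrow> 'v set \<Rightarrow> ('v \<Rightarrow> int) \<Rightarrow> ('v \<Rightarrow> int)
     \<Rightarrow> ('v site \<Rightarrow> int \<times> int) set \<Rightarrow> real" where
  "pair_measure V E T h A \<xi>p \<xi>m Ev =
     (\<Sum>(\<sigma>1, \<sigma>2) \<in> {(\<sigma>1, \<sigma>2) \<in> cond_configs V E A \<xi>p \<times> cond_configs V E A \<xi>m.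
                      pair_config \<sigma>1 \<sigma>2 \<in> Ev}.
        weight V E T h \<sigma>1 * weight V E T h \<sigma>2)
     / ((\<Sum>\<sigma>\<in>cond_configs V E A \<xi>p. weight V E T h \<sigma>) *
        (\<Sum>\<sigma>\<in>cond_configs V E A \<xi>m. weight V E T h \<sigma>))"

end

theory Submission imports Defs begin

text \<open>
  The inequality is an instance of Holley's inequality, which follows from the
  Ahlswede--Daykin four functions theorem. Pairs of extended configurations form a
  distributive lattice under the order of \<open>\<Theta>\<close>: the join takes the maximum in the first and
  the minimum in the second coordinate. Coding a pair by the threshold sets
  \<open>{k \<in> {0,1}. k \<le> \<sigma>\<^sub>1 x}\<close> and \<open>{k \<in> {0,1}. k \<le> -\<sigma>\<^sub>2 x}\<close> embeds this lattice into a power set,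
  where the four functions theorem is proved by induction from its two-point case. The product
  weight of a pair satisfies \<open>w(p) w(q) = w(p \<or> q) w(p \<and> q)\<close>, because the edge factor \<open>W\<close> is
  modular on the allowed vertex-edge values and the field term is linear. Raising the boundary
  conditions from \<open>\<xi>\<close> to \<open>\<zeta>\<close> maps joins into the \<open>\<zeta>\<close>-constrained pairs and meets into the
  \<open>\<xi>\<close>-constrained ones, so Holley's inequality applies to every increasing event.
\<close>

lemma four_functions_two_point:
  fixes a0 a1 b0 b1 c0 c1 d0 d1 :: real
  assumes "a0 \<ge> 0" "a1 \<ge> 0" "b0 \<ge> 0" "b1 \<ge> 0" "c0 \<ge> 0" "c1 \<ge> 0" "d0 \<ge> 0" "d1 \<ge> 0"
    and h00: "a0 * b0 \<le> c0 * d0" and h11: "a1 * b1 \<le> c1 * d1"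
    and h01: "a0 * b1 \<le> c1 * d0" and h10: "a1 * b0 \<le> c1 * d0"
  shows "(a0 + a1) * (b0 + b1) \<le> (c0 + c1) * (d0 + d1)"
proof -
  have cross: "a0 * b1 + a1 * b0 \<le> c1 * d0 + c0 * d1"
  proof (cases "c1 * d0 = 0")
    case True
    have "a0 * b1 \<ge> 0" "a1 * b0 \<ge> 0" "c0 * d1 \<ge> 0" using assms by simp_all
    then show ?thesis using True h01 h10 by linarith
  next
    case False
    define p q r s where "p = a0 * b1" and "q = a1 * b0" and "r = c1 * d0" and "s = c0 * d1"
    have "r > 0" using False assms unfolding r_def by simp
    have "p * q = (a0 * b0) * (a1 * b1)" unfolding p_def q_def by (simp add: algebra_simps)
    also have "\<dots> \<le> (c0 * d0) * (c1 * d1)"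
      by (rule mult_mono[OF h00 h11]) (use assms in simp_all)
    also have "\<dots> = s * r" unfolding s_def r_def by (simp add: algebra_simps)
    finally have "p * q \<le> s * r" .
    moreover have "(r - p) * (r - q) \<ge> 0"
      using h01 h10 unfolding p_def q_def r_def by simp
    moreover have "r * (r + s - p - q) = (r - p) * (r - q) + (s * r - p * q)"
      by (simp add: algebra_simps)
    ultimately have "r * (r + s - p - q) \<ge> 0" by linarith
    with \<open>r > 0\<close> have "p + q \<le> r + s" by (simp add: zero_le_mult_iff)
    then show ?thesis unfolding p_def q_def r_def s_def by linarith
  qed
  show ?thesis using cross h00 h11 by (simp add: algebra_simps)
qed

lemma sum_Pow_insert:
  assumes "finite U" "u \<notin> U"
  shows "sum f (Pow (insert u U)) = (\<Sum>X\<in>Pow U. f X + f (insert u X))"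
proof -
  have "inj_on (insert u) (Pow U)" "Pow U \<inter> insert u ` Pow U = {}"
    using assms(2) by (auto simp: inj_on_def)
  then show ?thesis
    using assms(1) by (simp add: Pow_insert sum.union_disjoint sum.reindex sum.distrib)
qed

theorem four_functions_Pow:
  fixes \<alpha> \<beta> \<gamma> \<delta> :: "'a set \<Rightarrow> real"
  assumes "finite U"
    and "\<And>X. \<alpha> X \<ge> 0" "\<And>X. \<beta> X \<ge> 0" "\<And>X. \<gamma> X \<ge> 0" "\<And>X. \<delta> X \<ge> 0"
    and "\<And>X Y. X \<subseteq> U \<Longrightarrow> Y \<subseteq> U \<Longrightarrow> \<alpha> X * \<beta> Y \<le> \<gamma> (X \<union> Y) * \<delta> (X \<inter> Y)"
  shows "sum \<alpha> (Pow U) * sum \<beta> (Pow U) \<le> sum \<gamma> (Pow U) * sum \<delta> (Pow U)"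
  using assms
proof (induction U arbitrary: \<alpha> \<beta> \<gamma> \<delta> rule: finite_induct)
  case empty
  then show ?case using empty.prems(5)[of "{}" "{}"] by simp
next
  case (insert u U)
  note four = insert.prems(5)
  have "(\<Sum>X\<in>Pow U. \<alpha> X + \<alpha> (insert u X)) * (\<Sum>X\<in>Pow U. \<beta> X + \<beta> (insert u X))
     \<le> (\<Sum>X\<in>Pow U. \<gamma> X + \<gamma> (insert u X)) * (\<Sum>X\<in>Pow U. \<delta> X + \<delta> (insert u X))"
  proof (rule insert.IH)
    fix X Y assume X: "X \<subseteq> U" and Y: "Y \<subseteq> U"
    with insert.hyps(2) have "u \<notin> X" "u \<notin> Y" by auto
    have "\<alpha> X * \<beta> Y \<le> \<gamma> (X \<union> Y) * \<delta> (X \<inter> Y)"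
      using four X Y by blast
    moreover have "insert u X \<union> insert u Y = insert u (X \<union> Y)"
      and "insert u X \<inter> insert u Y = insert u (X \<inter> Y)" by auto
    with four[of "insert u X" "insert u Y"] X Y
    have "\<alpha> (insert u X) * \<beta> (insert u Y) \<le> \<gamma> (insert u (X \<union> Y)) * \<delta> (insert u (X \<inter> Y))"
      by auto
    moreover have "\<alpha> X * \<beta> (insert u Y) \<le> \<gamma> (insert u (X \<union> Y)) * \<delta> (X \<inter> Y)"
      using four[of X "insert u Y"] X Y \<open>u \<notin> X\<close> by auto
    moreover have "\<alpha> (insert u X) * \<beta> Y \<le> \<gamma> (insert u (X \<union> Y)) * \<delta> (X \<inter> Y)"
      using four[of "insert u X" Y] X Y \<open>u \<notin> Y\<close> by auto
    ultimately show "(\<alpha> X + \<alpha> (insert u X)) * (\<beta> Y + \<beta> (insert u Y))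
          \<le> (\<gamma> (X \<union> Y) + \<gamma> (insert u (X \<union> Y))) * (\<delta> (X \<inter> Y) + \<delta> (insert u (X \<inter> Y)))"
      by (intro four_functions_two_point) (simp_all add: insert.prems(1-4))
  qed (simp_all add: insert.prems(1-4))
  then show ?case using insert.hyps by (simp add: sum_Pow_insert)
qed

locale set_lattice_embedding =
  fixes X :: "'b set" and U :: "'a set" and code :: "'b \<Rightarrow> 'a set"
    and join meet :: "'b \<Rightarrow> 'b \<Rightarrow> 'b"
  assumes finite_U: "finite U"
    and code_subset: "p \<in> X \<Longrightarrow> code p \<subseteq> U"
    and inj_code: "inj_on code X"
    and join_closed: "p \<in> X \<Longrightarrow> q \<in> X \<Longrightarrow> join p q \<in> X"
    and meet_closed: "p \<in> X \<Longrightarrow> q \<in> X \<Longrightarrow> meet p q \<in> X"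
    and code_join: "p \<in> X \<Longrightarrow> q \<in> X \<Longrightarrow> code (join p q) = code p \<union> code q"
    and code_meet: "p \<in> X \<Longrightarrow> q \<in> X \<Longrightarrow> code (meet p q) = code p \<inter> code q"
begin

definition lift :: "('b \<Rightarrow> real) \<Rightarrow> 'a set \<Rightarrow> real" where
  "lift f S = (if S \<in> code ` X then f (inv_into X code S) else 0)"

lemma lift_code: "p \<in> X \<Longrightarrow> lift f (code p) = f p"
  using inj_code by (simp add: lift_def)

lemma lift_nonneg: "(\<And>p. p \<in> X \<Longrightarrow> f p \<ge> 0) \<Longrightarrow> lift f S \<ge> 0"
  by (simp add: lift_def inv_into_into)

lemma sum_lift: "sum (lift f) (Pow U) = sum f X"
proof -
  have "code ` X \<subseteq> Pow U" using code_subset by auto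
  then have "sum (lift f) (Pow U) = sum (lift f) (code ` X)"
    using finite_U by (intro sum.mono_neutral_right) (auto simp: lift_def)
  also have "\<dots> = sum f X"
    using inj_code by (simp add: sum.reindex lift_code)
  finally show ?thesis .
qed

theorem four_functions:
  fixes \<alpha> \<beta> \<gamma> \<delta> :: "'b \<Rightarrow> real"
  assumes "\<And>p. p \<in> X \<Longrightarrow> \<alpha> p \<ge> 0" "\<And>p. p \<in> X \<Longrightarrow> \<beta> p \<ge> 0"
    and "\<And>p. p \<in> X \<Longrightarrow> \<gamma> p \<ge> 0" "\<And>p. p \<in> X \<Longrightarrow> \<delta> p \<ge> 0"
    and four: "\<And>p q. p \<in> X \<Longrightarrow> q \<in> X \<Longrightarrow> \<alpha> p * \<beta> q \<le> \<gamma> (join p q) * \<delta> (meet p q)"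
  shows "sum \<alpha> X * sum \<beta> X \<le> sum \<gamma> X * sum \<delta> X"
proof -
  have "sum (lift \<alpha>) (Pow U) * sum (lift \<beta>) (Pow U) \<le> sum (lift \<gamma>) (Pow U) * sum (lift \<delta>) (Pow U)"
  proof (rule four_functions_Pow[OF finite_U])
    fix S T
    show "lift \<alpha> S * lift \<beta> T \<le> lift \<gamma> (S \<union> T) * lift \<delta> (S \<inter> T)"
    proof (cases "S \<in> code ` X \<and> T \<in> code ` X")
      case True
      then obtain p q where "p \<in> X" "q \<in> X" "S = code p" "T = code q" by blast
      then show ?thesis
        by (simp add: code_join[symmetric] code_meet[symmetric] lift_code join_closed meet_closed four)
    next
      case False
      then have "lift \<alpha> S * lift \<beta> T = 0" by (auto simp: lift_def)
      moreover have "lift \<gamma> (S \<union> T) * lift \<delta> (S \<inter> T) \<ge> 0"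
        using assms(3,4) by (simp add: lift_nonneg)
      ultimately show ?thesis by auto
    qed
  qed (use assms(1-4) in \<open>simp_all add: lift_nonneg\<close>)
  then show ?thesis by (simp add: sum_lift)
qed

theorem holley_inequality:
  fixes w :: "'b \<Rightarrow> real"
  assumes w_nonneg: "\<And>p. p \<in> X \<Longrightarrow> w p \<ge> 0"
    and w_lattice: "\<And>p q. p \<in> X \<Longrightarrow> q \<in> X \<Longrightarrow> w p * w q \<le> w (join p q) * w (meet p q)"
    and "D1 \<subseteq> X" "D2 \<subseteq> X"
    and join_D2: "\<And>p q. p \<in> D1 \<Longrightarrow> q \<in> D2 \<Longrightarrow> join p q \<in> D2"
    and meet_D1: "\<And>p q. p \<in> D1 \<Longrightarrow> q \<in> D2 \<Longrightarrow> meet p q \<in> D1"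
    and join_F: "\<And>p q. p \<in> D1 \<Longrightarrow> q \<in> D2 \<Longrightarrow> p \<in> F \<Longrightarrow> join p q \<in> F"
  shows "sum w (D1 \<inter> F) * sum w D2 \<le> sum w (D2 \<inter> F) * sum w D1"
proof -
  have "finite (code ` X)"
    using finite_U code_subset by (meson finite_Pow_iff finite_subset image_subsetI PowI)
  then have "finite X" using inj_code by (rule finite_imageD)
  define restrict where "restrict D p = (if p \<in> D then w p else 0)" for D p
  have sum_restrict: "sum (restrict D) X = sum w D" if "D \<subseteq> X" for D
    using \<open>finite X\<close> that by (simp add: restrict_def sum.inter_restrict[symmetric] Int_absorb1)
  have "sum (restrict (D1 \<inter> F)) X * sum (restrict D2) X \<le> sum (restrict (D2 \<inter> F)) X * sum (restrict D1) X"
  proof (rule four_functions)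
    fix p q assume "p \<in> X" "q \<in> X"
    then show "restrict (D1 \<inter> F) p * restrict D2 q \<le> restrict (D2 \<inter> F) (join p q) * restrict D1 (meet p q)"
      using w_lattice w_nonneg join_D2 meet_D1 join_F \<open>D1 \<subseteq> X\<close> \<open>D2 \<subseteq> X\<close> join_closed meet_closed
      by (auto simp: restrict_def intro!: mult_nonneg_nonneg)
  qed (simp_all add: restrict_def w_nonneg)
  then show ?thesis using assms(3,4) by (simp add: sum_restrict le_infI1)
qed

end

lemma finite_sites: "is_graph V E \<Longrightarrow> finite (sites V E)"
  unfolding is_graph_def sites_def by (meson finite_Pow_iff finite_UnI finite_imageI finite_subset subsetI PowI)

lemma ext_configs_values: "\<sigma> \<in> ext_configs V E \<Longrightarrow> \<sigma> x \<in> {-1, 0, 1}"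
  unfolding ext_configs_def sites_def by (cases x) force+

lemma finite_ext_configs: "is_graph V E \<Longrightarrow> finite (ext_configs V E)"
proof -
  assume "is_graph V E"
  have "ext_configs V E \<subseteq> {\<sigma>. \<forall>x. (x \<in> sites V E \<longrightarrow> \<sigma> x \<in> {-1, 0, 1}) \<and> (x \<notin> sites V E \<longrightarrow> \<sigma> x = 0)}"
    using ext_configs_values by (auto simp: ext_configs_def)
  then show ?thesis
    using finite_set_of_finite_funs[OF finite_sites[OF \<open>is_graph V E\<close>], of "{-1, 0, 1 :: int}" 0]
    by (meson finite.emptyI finite.insertI finite_subset)
qed

lemma ext_configs_uminus: "\<sigma> \<in> ext_configs V E \<Longrightarrow> (\<lambda>x. - \<sigma> x) \<in> ext_configs V E"
  unfolding ext_configs_def by (auto simp: abs_le_iff)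

lemma ext_configs_max:
  assumes "\<sigma> \<in> ext_configs V E" "\<tau> \<in> ext_configs V E"
  shows "(\<lambda>x. max (\<sigma> x) (\<tau> x)) \<in> ext_configs V E"
proof -
  have "\<bar>max (\<sigma> (Inl v)) (\<tau> (Inl v)) - max (\<sigma> (Inr e)) (\<tau> (Inr e))\<bar> \<le> 1" if "e \<in> E" "v \<in> e" for e v
  proof -
    have "\<bar>\<sigma> (Inl v) - \<sigma> (Inr e)\<bar> \<le> 1" "\<bar>\<tau> (Inl v) - \<tau> (Inr e)\<bar> \<le> 1"
      using assms that unfolding ext_configs_def by blast+
    then show ?thesis by (simp add: abs_le_iff max_def)
  qed
  then show ?thesis using assms unfolding ext_configs_def by (auto simp: max_def)
qed

lemma ext_configs_min:
  assumes "\<sigma> \<in> ext_configs V E" "\<tau> \<in> ext_configs V E"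
  shows "(\<lambda>x. min (\<sigma> x) (\<tau> x)) \<in> ext_configs V E"
proof -
  have "(\<lambda>x. - max (- \<sigma> x) (- \<tau> x)) \<in> ext_configs V E"
    using assms by (intro ext_configs_uminus ext_configs_max)
  moreover have "(\<lambda>x. - max (- \<sigma> x) (- \<tau> x)) = (\<lambda>x. min (\<sigma> x) (\<tau> x))"
    by (auto simp: fun_eq_iff max_def min_def)
  ultimately show ?thesis by simp
qed

lemma ext_configs_eqI:
  assumes "\<sigma> \<in> ext_configs V E" "\<tau> \<in> ext_configs V E"
    and "\<And>x k. x \<in> sites V E \<Longrightarrow> k \<in> {0, 1} \<Longrightarrow> k \<le> \<sigma> x \<longleftrightarrow> k \<le> \<tau> x"
  shows "\<sigma> = \<tau>"
proof
  fix x
  show "\<sigma> x = \<tau> x"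
  proof (cases "x \<in> sites V E")
    case True
    then show ?thesis
      using assms(3)[of x 0] assms(3)[of x 1] ext_configs_values[OF assms(1), of x]
        ext_configs_values[OF assms(2), of x]
      by auto
  next
    case False
    then show ?thesis using assms(1,2) by (auto simp: ext_configs_def)
  qed
qed

type_synonym 's config_pair = "('s \<Rightarrow> int) \<times> ('s \<Rightarrow> int)"

definition pair_sup :: "'s config_pair \<Rightarrow> 's config_pair \<Rightarrow> 's config_pair" where
  "pair_sup p q = ((\<lambda>x. max (fst p x) (fst q x)), (\<lambda>x. min (snd p x) (snd q x)))"

definition pair_inf :: "'s config_pair \<Rightarrow> 's config_pair \<Rightarrow> 's config_pair" where
  "pair_inf p q = ((\<lambda>x. min (fst p x) (fst q x)), (\<lambda>x. max (snd p x) (snd q x)))"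

definition pair_code :: "'s set \<Rightarrow> 's config_pair \<Rightarrow> (bool \<times> 's \<times> int) set" where
  "pair_code S p = {(b, x, k). x \<in> S \<and> k \<in> {0, 1} \<and> k \<le> (if b then fst p x else - snd p x)}"

lemma pair_code_sup: "pair_code S (pair_sup p q) = pair_code S p \<union> pair_code S q"
  unfolding pair_code_def pair_sup_def by (auto simp: max_def min_def split: if_splits)

lemma pair_code_inf: "pair_code S (pair_inf p q) = pair_code S p \<inter> pair_code S q"
  unfolding pair_code_def pair_inf_def by (auto simp: max_def min_def split: if_splits)

lemma inj_on_pair_code: "inj_on (pair_code (sites V E)) (ext_configs V E \<times> ext_configs V E)"
proof (rule inj_onI)
  fix p q
  assume p: "p \<in> ext_configs V E \<times> ext_configs V E" and q: "q \<in> ext_configs V E \<times> ext_configs V E"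
    and code: "pair_code (sites V E) p = pair_code (sites V E) q"
  have thresholds: "k \<le> (if b then fst p x else - snd p x) \<longleftrightarrow> k \<le> (if b then fst q x else - snd q x)"
    if "x \<in> sites V E" "k \<in> {0, 1}" for b x k
  proof -
    have "(b, x, k) \<in> pair_code (sites V E) p \<longleftrightarrow> (b, x, k) \<in> pair_code (sites V E) q"
      using code by simp
    then show ?thesis using that by (simp add: pair_code_def)
  qed
  have "fst p = fst q"
    using p q thresholds[of _ _ True] by (intro ext_configs_eqI) auto
  moreover have "(\<lambda>x. - snd p x) = (\<lambda>x. - snd q x)"
    using p q thresholds[of _ _ False] by (intro ext_configs_eqI ext_configs_uminus) auto
  then have "snd p = snd q" by (simp add: fun_eq_iff)
  ultimately show "p = q" by (simp add: prod_eq_iff)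
qed

lemma set_lattice_embedding_pair_code:
  assumes "is_graph V E"
  shows "set_lattice_embedding (ext_configs V E \<times> ext_configs V E) (UNIV \<times> sites V E \<times> {0, 1})
    (pair_code (sites V E)) pair_sup pair_inf"
proof unfold_locales
  show "finite ((UNIV :: bool set) \<times> sites V E \<times> {0, 1 :: int})"
    using finite_sites[OF assms] by (simp add: finite_cartesian_product)
  show "inj_on (pair_code (sites V E)) (ext_configs V E \<times> ext_configs V E)"
    by (rule inj_on_pair_code)
  fix p q
  assume p: "p \<in> ext_configs V E \<times> ext_configs V E" and q: "q \<in> ext_configs V E \<times> ext_configs V E"
  show "pair_code (sites V E) p \<subseteq> UNIV \<times> sites V E \<times> {0, 1}"
    by (auto simp: pair_code_def)
  show "pair_sup p q \<in> ext_configs V E \<times> ext_configs V E"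
    using p q by (simp add: pair_sup_def mem_Times_iff ext_configs_max ext_configs_min)
  show "pair_inf p q \<in> ext_configs V E \<times> ext_configs V E"
    using p q by (simp add: pair_inf_def mem_Times_iff ext_configs_max ext_configs_min)
  show "pair_code (sites V E) (pair_sup p q) = pair_code (sites V E) p \<union> pair_code (sites V E) q"
    by (rule pair_code_sup)
  show "pair_code (sites V E) (pair_inf p q) = pair_code (sites V E) p \<inter> pair_code (sites V E) q"
    by (rule pair_code_inf)
qed

lemma t_param_pos: "T > 0 \<Longrightarrow> t_param T > 0"
  unfolding t_param_def by simp

lemma W_nonneg: "T > 0 \<Longrightarrow> W T a b \<ge> 0"
  unfolding W_def using t_param_pos[of T] by simp

lemma weight_nonneg: "T > 0 \<Longrightarrow> weight V E T h \<sigma> \<ge> 0"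
  unfolding weight_def by (intro mult_nonneg_nonneg prod_nonneg W_nonneg) auto

lemma W_max_min:
  fixes a a' b b' :: int
  assumes "a \<in> {-1, 1}" "a' \<in> {-1, 1}" "b \<in> {-1, 0, 1}" "b' \<in> {-1, 0, 1}"
    and "\<bar>a - b\<bar> \<le> 1" "\<bar>a' - b'\<bar> \<le> 1"
  shows "W T a b * W T a' b' = W T (max a a') (max b b') * W T (min a a') (min b b')"
  using assms(1-4) by (elim insertE emptyE; use assms(5,6) in \<open>simp add: W_def\<close>)

lemma weight_max_min:
  assumes "is_graph V E" "\<sigma> \<in> ext_configs V E" "\<tau> \<in> ext_configs V E"
  shows "weight V E T h \<sigma> * weight V E T h \<tau> =
    weight V E T h (\<lambda>x. max (\<sigma> x) (\<tau> x)) * weight V E T h (\<lambda>x. min (\<sigma> x) (\<tau> x))"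
proof -
  let ?edges = "\<lambda>\<sigma>. \<Prod>e\<in>E. \<Prod>v\<in>e. W T (\<sigma> (Inl v)) (\<sigma> (Inr e))"
  let ?field = "\<lambda>\<sigma>. \<Sum>v\<in>V. h v * of_int (\<sigma> (Inl v))"
  have "?edges \<sigma> * ?edges \<tau> = ?edges (\<lambda>x. max (\<sigma> x) (\<tau> x)) * ?edges (\<lambda>x. min (\<sigma> x) (\<tau> x))"
    unfolding prod.distrib[symmetric]
  proof (intro prod.cong refl)
    fix e v assume "e \<in> E" "v \<in> e"
    moreover have "v \<in> V" using assms(1) \<open>e \<in> E\<close> \<open>v \<in> e\<close> by (auto simp: is_graph_def)
    ultimately show "W T (\<sigma> (Inl v)) (\<sigma> (Inr e)) * W T (\<tau> (Inl v)) (\<tau> (Inr e)) =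
      W T (max (\<sigma> (Inl v)) (\<tau> (Inl v))) (max (\<sigma> (Inr e)) (\<tau> (Inr e))) *
      W T (min (\<sigma> (Inl v)) (\<tau> (Inl v))) (min (\<sigma> (Inr e)) (\<tau> (Inr e)))"
      using assms(2,3) by (intro W_max_min) (auto simp: ext_configs_def)
  qed
  moreover have "?field \<sigma> + ?field \<tau> = ?field (\<lambda>x. max (\<sigma> x) (\<tau> x)) + ?field (\<lambda>x. min (\<sigma> x) (\<tau> x))"
    unfolding sum.distrib[symmetric] by (intro sum.cong refl) (simp add: max_def min_def algebra_simps)
  then have "exp (?field \<sigma> / T) * exp (?field \<tau> / T) =
      exp (?field (\<lambda>x. max (\<sigma> x) (\<tau> x)) / T) * exp (?field (\<lambda>x. min (\<sigma> x) (\<tau> x)) / T)"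
    by (simp only: exp_add[symmetric] add_divide_distrib[symmetric])
  ultimately show ?thesis unfolding weight_def by (simp add: algebra_simps)
qed

definition pair_weight :: "'v set \<Rightarrow> 'v set set \<Rightarrow> real \<Rightarrow> ('v \<Rightarrow> real) \<Rightarrow> 'v site config_pair \<Rightarrow> real" where
  "pair_weight V E T h = (\<lambda>(\<sigma>1, \<sigma>2). weight V E T h \<sigma>1 * weight V E T h \<sigma>2)"

lemma pair_weight_nonneg: "T > 0 \<Longrightarrow> pair_weight V E T h p \<ge> 0"
  unfolding pair_weight_def by (auto simp: weight_nonneg split: prod.split)

lemma pair_weight_sup_inf:
  assumes "is_graph V E" "p \<in> ext_configs V E \<times> ext_configs V E" "q \<in> ext_configs V E \<times> ext_configs V E"
  shows "pair_weight V E T h p * pair_weight V E T h q =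
    pair_weight V E T h (pair_sup p q) * pair_weight V E T h (pair_inf p q)"
proof -
  obtain \<sigma>1 \<sigma>2 \<tau>1 \<tau>2 where "p = (\<sigma>1, \<sigma>2)" "q = (\<tau>1, \<tau>2)" by fastforce
  with assms show ?thesis
    using weight_max_min[OF assms(1), of \<sigma>1 \<tau>1 T h] weight_max_min[OF assms(1), of \<sigma>2 \<tau>2 T h]
    by (simp add: pair_weight_def pair_sup_def pair_inf_def algebra_simps)
qed

lemma sum_pair_weight_Times:
  "sum (pair_weight V E T h) (B \<times> C) = sum (weight V E T h) B * sum (weight V E T h) C"
  unfolding pair_weight_def by (simp add: sum_product sum.cartesian_product)

lemma sum_weight_cond_configs_pos:
  fixes V :: "'v set"
  assumes "is_graph V E" "A \<subseteq> V" "T > 0" "\<forall>v\<in>A. \<xi> v \<in> {-1, 1}"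
  shows "sum (weight V E T h) (cond_configs V E A \<xi>) > 0"
proof -
  define \<sigma> :: "'v site \<Rightarrow> int" where
    "\<sigma> = (\<lambda>x. case x of Inl v \<Rightarrow> if v \<in> V then (if v \<in> A then \<xi> v else 1) else 0 | Inr e \<Rightarrow> 0)"
  have edge_V: "\<And>e v. e \<in> E \<Longrightarrow> v \<in> e \<Longrightarrow> v \<in> V" using assms(1) by (auto simp: is_graph_def)
  have spins: "\<And>v. v \<in> V \<Longrightarrow> \<sigma> (Inl v) \<in> {-1, 1}" using assms(4) by (auto simp: \<sigma>_def)
  have "\<sigma> x = 0" if "x \<notin> sites V E" for x
    using that by (cases x) (auto simp: \<sigma>_def sites_def)
  then have "\<sigma> \<in> cond_configs V E A \<xi>"
    using spins edge_V assms(2) by (fastforce simp: cond_configs_def ext_configs_def \<sigma>_def)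
  moreover have "finite (cond_configs V E A \<xi>)"
    using finite_ext_configs[OF assms(1)] by (rule finite_subset[rotated]) (auto simp: cond_configs_def)
  moreover have "weight V E T h \<sigma> > 0"
    unfolding weight_def
  proof (intro mult_pos_pos prod_pos exp_gt_zero)
    fix e v assume "e \<in> E" "v \<in> e"
    then have "\<sigma> (Inl v) \<in> {-1, 1}" "\<sigma> (Inr e) = 0" using spins edge_V by (auto simp: \<sigma>_def)
    then show "W T (\<sigma> (Inl v)) (\<sigma> (Inr e)) > 0" using t_param_pos[OF assms(3)] by (auto simp: W_def)
  qed
  ultimately show ?thesis
    using weight_nonneg[OF assms(3)] by (intro sum_pos2) auto
qed

lemma pair_sup_mem_cond_configs:
  assumes "p \<in> cond_configs V E A \<xi>p \<times> cond_configs V E A \<xi>m"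
    and "q \<in> cond_configs V E A \<zeta>p \<times> cond_configs V E A \<zeta>m"
    and "\<forall>v\<in>A. \<xi>p v \<le> \<zeta>p v \<and> \<xi>m v \<ge> \<zeta>m v"
  shows "pair_sup p q \<in> cond_configs V E A \<zeta>p \<times> cond_configs V E A \<zeta>m"
  using assms by (auto simp: pair_sup_def cond_configs_def ext_configs_max ext_configs_min)

lemma pair_inf_mem_cond_configs:
  assumes "p \<in> cond_configs V E A \<xi>p \<times> cond_configs V E A \<xi>m"
    and "q \<in> cond_configs V E A \<zeta>p \<times> cond_configs V E A \<zeta>m"
    and "\<forall>v\<in>A. \<xi>p v \<le> \<zeta>p v \<and> \<xi>m v \<ge> \<zeta>m v"
  shows "pair_inf p q \<in> cond_configs V E A \<xi>p \<times> cond_configs V E A \<xi>m"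
  using assms by (auto simp: pair_inf_def cond_configs_def ext_configs_max ext_configs_min)

lemma pair_config_mem_Theta_configs:
  assumes "\<sigma>1 \<in> ext_configs V E" "\<sigma>2 \<in> ext_configs V E"
  shows "pair_config \<sigma>1 \<sigma>2 \<in> Theta_configs V E"
  using assms ext_configs_values[OF assms(1)] ext_configs_values[OF assms(2)]
  by (auto simp: Theta_configs_def Theta_def pair_config_def ext_configs_def)

lemma increasing_event_pair_sup:
  assumes "increasing_event V E Ev"
    and "p \<in> ext_configs V E \<times> ext_configs V E" "q \<in> ext_configs V E \<times> ext_configs V E"
    and "case_prod pair_config p \<in> Ev"
  shows "case_prod pair_config (pair_sup p q) \<in> Ev"
proof -
  obtain \<sigma>1 \<sigma>2 \<tau>1 \<tau>2 where pq: "p = (\<sigma>1, \<sigma>2)" "q = (\<tau>1, \<tau>2)" by fastforce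
  have "pair_config (\<lambda>x. max (\<sigma>1 x) (\<tau>1 x)) (\<lambda>x. min (\<sigma>2 x) (\<tau>2 x)) \<in> Theta_configs V E"
    using assms(2,3) pq by (auto intro: pair_config_mem_Theta_configs ext_configs_max ext_configs_min)
  with assms(1,4) pq show ?thesis
    unfolding increasing_event_def by (auto simp: pair_sup_def pair_config_def theta_ge_def)
qed

lemma pair_measure_eq:
  "pair_measure V E T h A \<xi>p \<xi>m Ev =
    sum (pair_weight V E T h) ((cond_configs V E A \<xi>p \<times> cond_configs V E A \<xi>m) \<inter> {p. case_prod pair_config p \<in> Ev})
    / sum (pair_weight V E T h) (cond_configs V E A \<xi>p \<times> cond_configs V E A \<xi>m)"
proof -
  have "{(\<sigma>1, \<sigma>2) \<in> cond_configs V E A \<xi>p \<times> cond_configs V E A \<xi>m. pair_config \<sigma>1 \<sigma>2 \<in> Ev} =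
      (cond_configs V E A \<xi>p \<times> cond_configs V E A \<xi>m) \<inter> {p. case_prod pair_config p \<in> Ev}"
    by auto
  then show ?thesis
    unfolding pair_measure_def sum_pair_weight_Times by (simp add: pair_weight_def)
qed

lemma pair_weight_holley:
  assumes "is_graph V E" "T > 0"
    and "\<forall>v\<in>A. \<xi>p v \<le> \<zeta>p v \<and> \<xi>m v \<ge> \<zeta>m v"
    and "increasing_event V E Ev"
  defines "D\<xi> \<equiv> cond_configs V E A \<xi>p \<times> cond_configs V E A \<xi>m"
    and "D\<zeta> \<equiv> cond_configs V E A \<zeta>p \<times> cond_configs V E A \<zeta>m"
    and "F \<equiv> {p. case_prod pair_config p \<in> Ev}"
  shows "sum (pair_weight V E T h) (D\<xi> \<inter> F) * sum (pair_weight V E T h) D\<zeta>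
    \<le> sum (pair_weight V E T h) (D\<zeta> \<inter> F) * sum (pair_weight V E T h) D\<xi>"
proof -
  interpret set_lattice_embedding "ext_configs V E \<times> ext_configs V E" "UNIV \<times> sites V E \<times> {0, 1}"
    "pair_code (sites V E)" pair_sup pair_inf
    using assms(1) by (rule set_lattice_embedding_pair_code)
  have D_ext: "D\<xi> \<subseteq> ext_configs V E \<times> ext_configs V E" "D\<zeta> \<subseteq> ext_configs V E \<times> ext_configs V E"
    unfolding D\<xi>_def D\<zeta>_def by (auto simp: cond_configs_def)
  show ?thesis
  proof (rule holley_inequality[OF _ _ D_ext])
    fix p q
    assume p: "p \<in> ext_configs V E \<times> ext_configs V E" and q: "q \<in> ext_configs V E \<times> ext_configs V E"
    show "pair_weight V E T h p \<ge> 0" using assms(2) by (rule pair_weight_nonneg)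
    show "pair_weight V E T h p * pair_weight V E T h q
      \<le> pair_weight V E T h (pair_sup p q) * pair_weight V E T h (pair_inf p q)"
      using pair_weight_sup_inf[OF assms(1) p q] by simp
  next
    fix p q assume "p \<in> D\<xi>" "q \<in> D\<zeta>"
    then show "pair_sup p q \<in> D\<zeta>" "pair_inf p q \<in> D\<xi>"
      using assms(3) unfolding D\<xi>_def D\<zeta>_def
      by (simp_all add: pair_sup_mem_cond_configs pair_inf_mem_cond_configs)
    show "pair_sup p q \<in> F" if "p \<in> F"
      using increasing_event_pair_sup[OF assms(4)] that \<open>p \<in> D\<xi>\<close> \<open>q \<in> D\<zeta>\<close> D_ext
      unfolding F_def by blast
  qed
qed

theorem lemma2p4:
  fixes V :: "'v set" and E :: "'v set set" and A :: "'v set"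
    and h :: "'v \<Rightarrow> real" and T :: real
    and \<xi>p \<xi>m \<zeta>p \<zeta>m :: "'v \<Rightarrow> int"
    and Ev :: "('v + 'v set \<Rightarrow> int \<times> int) set"
  assumes "is_graph V E"
    and "A \<subseteq> V"
    and "T > 0"
    and "\<forall>v\<in>A. \<xi>p v \<in> {-1, 1} \<and> \<xi>m v \<in> {-1, 1} \<and> \<zeta>p v \<in> {-1, 1} \<and> \<zeta>m v \<in> {-1, 1}"
    and "\<forall>v\<in>A. \<xi>p v \<le> \<zeta>p v \<and> \<xi>m v \<ge> \<zeta>m v"
    and "increasing_event V E Ev"
  shows "pair_measure V E T h A \<xi>p \<xi>m Ev \<le> pair_measure V E T h A \<zeta>p \<zeta>m Ev"
proof -
  let ?w = "pair_weight V E T h"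
  let ?D\<xi> = "cond_configs V E A \<xi>p \<times> cond_configs V E A \<xi>m"
  let ?D\<zeta> = "cond_configs V E A \<zeta>p \<times> cond_configs V E A \<zeta>m"
  let ?F = "{p. case_prod pair_config p \<in> Ev}"
  have "sum ?w (?D\<xi> \<inter> ?F) * sum ?w ?D\<zeta> \<le> sum ?w (?D\<zeta> \<inter> ?F) * sum ?w ?D\<xi>"
    using assms(1,3,5,6) by (rule pair_weight_holley)
  moreover have "sum ?w ?D\<xi> > 0" "sum ?w ?D\<zeta> > 0"
    using assms(1-4) by (simp_all add: sum_pair_weight_Times sum_weight_cond_configs_pos)
  ultimately show ?thesis
    unfolding pair_measure_eq by (simp add: divide_le_eq le_divide_eq mult.commute mult.left_commute)
qed

end
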